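(* Fix an observation sequence $\{s_t,a_t\}_{t\in\mathbb Z}$, $\theta,\hat\theta\in\Theta$, a time $t$, an indexed family $\{\rho^\theta_t\}_{t\in\mathbb Z}$ as below, and any probability measure $\varphi$ on $\mathcal O\times\{0,1\}$. Then $$\big\|\varphi K^{\hat\theta,\theta}_{F,t}-\varphi K^{\theta,\theta}_{F,t}\big\|_{TV}\le\frac{\max_{o_{t-1},o_t,b_t}h(\theta;o_{t-1},s_t,a_t,o_t,b_t)}{\min_{o_{t-1},o_t,b_t}h(\theta;o_{t-1},s_t,a_t,o_t,b_t)}\cdot\frac{L_{\theta,\|\hat\theta-\theta\|_2}\,\|\hat\theta-\theta\|_2}{\min_{o_{t-1},o_t,b_t}h(\hat\theta;o_{t-1},s_t,a_t,o_t,b_t)}.$$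
   Context: $\mathcal S,\mathcal A,\mathcal O$ are finite sets; $\Theta=\Theta_{hi}\times\Theta_{lo}\times\Theta_b$ is a convex compact subset of a Euclidean space. There are policies $\pi_{hi}(o\mid s;\theta_{hi})$ (distribution on $\mathcal O$), $\pi_{lo}(a\mid s,o;\theta_{lo})$ (distribution on $\mathcal A$), $\pi_b(b\mid s,o';\theta_b)$ (distribution on $\{0,1\}$); standing assumption: on an open set $\tilde\Theta\supseteq\Theta$ they are defined, strictly positive and continuously differentiable in $\theta$. For fixed $\zeta\in(0,1)$, $\bar\pi_{hi}(o_t\mid s_t,o_{t-1},b_t;\theta_{hi})$ equals $\pi_{hi}(o_t\mid s_t;\theta_{hi})$ if $b_t=1$, $1-\zeta+\zeta/|\mathcal O|$ if $b_t=0,o_t=o_{t-1}$, $\zeta/|\mathcal O|$ if $b_t=0,o_t\ne o_{t-1}$. Define $h(\theta;o_{t-1},s_t,a_t,o_t,b_t)=\pi_b(b_t\mid s_t,o_{t-1};\theta_b)\bar\pi_{hi}(o_t\mid s_t,o_{t-1},b_t;\theta_{hi})\pi_{lo}(a_t\mid s_t,o_t;\theta_{lo})$. For $\theta\in\Theta,\delta>0$, $L_{\theta,\delta}$ is the smallest constant $L$ such that for all values of $(o_{t-1},s_t,a_t,o_t,b_t)$, $\tilde\theta\mapsto h(\tilde\theta;o_{t-1},s_t,a_t,o_t,b_t)$ is $L$-Lipschitz (in $\|\cdot\|_2$) on $\{\tilde\theta\in\Theta:\|\tilde\theta-\theta\|_2\le\delta\}$. Given the observation sequence, the backward operator $B^\theta_t$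 maps a probability measure $\rho$ on $\mathcal O\times\{0,1\}$ to the probability measure $B^\theta_t\rho(o_t,b_t)\propto\sum_{o_{t+1},b_{t+1}}h(\theta;o_t,s_{t+1},a_{t+1},o_{t+1},b_{t+1})\rho(o_{t+1},b_{t+1})$ (normalized). $\{\rho^\theta_t\}_{t\in\mathbb Z}$ is a family of strictly positive probability measures on $\mathcal O\times\{0,1\}$ with $B^\theta_t\rho^\theta_{t+1}=\rho^\theta_t$ for all $t$. For $\hat\theta\in\Theta$, the forward smoothing operator is $\varphi K^{\hat\theta,\theta}_{F,t}(o_t,b_t)=C^{\hat\theta,\theta}_F\sum_{o_{t-1},b_{t-1}}\frac{h(\hat\theta;o_{t-1},s_t,a_t,o_t,b_t)\rho^\theta_t(o_t,b_t)\varphi(o_{t-1},b_{t-1})}{\sum_{o'_t,b'_t}h(\theta;o_{t-1},s_t,a_t,o'_t,b'_t)\rho^\theta_t(o'_t,b'_t)}$, where $C^{\hat\theta,\theta}_F>0$ normalizes the result to a probability measure. $\|\nu_1-\nu_2\|_{TV}=\frac12\sum|\nu_1-\nu_2|$. *)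

theory Defs
  imports "HOL-Analysis.Analysis"
begin

(* Parameters: theta = (theta_hi, theta_lo, theta_b) :: 'h \<times> 'l \<times> 'b.
   The product norm of Isabelle is the Euclidean (L2) norm of the concatenation. *)

definition pibar_hi ::
  "real \<Rightarrow> ('h \<Rightarrow> 's \<Rightarrow> 'o::finite \<Rightarrow> real) \<Rightarrow> 'h \<Rightarrow> 's \<Rightarrow> 'o \<Rightarrow> bool \<Rightarrow> 'o \<Rightarrow> real" where
  "pibar_hi zeta pi_hi th s o_prev b o_cur =
     (if b then pi_hi th s o_cur
      else if o_cur = o_prev then 1 - zeta + zeta / real CARD('o)
      else zeta / real CARD('o))"

definition hfun ::
  "real \<Rightarrow> ('h \<Rightarrow> 's \<Rightarrow> 'o::finite \<Rightarrow> real) \<Rightarrow> ('l \<Rightarrow> 's \<Rightarrow> 'o \<Rightarrow> 'a \<Rightarrow> real)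
   \<Rightarrow> ('b \<Rightarrow> 's \<Rightarrow> 'o \<Rightarrow> bool \<Rightarrow> real)
   \<Rightarrow> 'h \<times> 'l \<times> 'b \<Rightarrow> 'o \<Rightarrow> 's \<Rightarrow> 'a \<Rightarrow> 'o \<Rightarrow> bool \<Rightarrow> real" where
  "hfun zeta pi_hi pi_lo pi_b th o_prev s a o_cur b =
     pi_b (snd (snd th)) s o_prev b * pibar_hi zeta pi_hi (fst th) s o_prev b o_cur
     * pi_lo (fst (snd th)) s o_cur a"

definition Lconst ::
  "('p::metric_space) set \<Rightarrow> ('p \<Rightarrow> 'o \<Rightarrow> 's \<Rightarrow> 'a \<Rightarrow> 'o \<Rightarrow> bool \<Rightarrow> real) \<Rightarrow> 'p \<Rightarrow> real \<Rightarrow> real" where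
  "Lconst Theta h th delta =
     Inf {L. \<forall>o_prev s a o_cur b.
               L-lipschitz_on (Theta \<inter> cball th delta) (\<lambda>th'. h th' o_prev s a o_cur b)}"

definition C1_on :: "('p::real_normed_vector) set \<Rightarrow> ('p \<Rightarrow> real) \<Rightarrow> bool" where
  "C1_on U f \<longleftrightarrow> (\<exists>D. (\<forall>x\<in>U. (f has_derivative blinfun_apply (D x)) (at x)) \<and> continuous_on U D)"

definition is_prob :: "('x::finite \<Rightarrow> real) \<Rightarrow> bool" where
  "is_prob nu \<longleftrightarrow> (\<forall>x. 0 \<le> nu x) \<and> sum nu UNIV = 1"

definition normalize :: "('x::finite \<Rightarrow> real) \<Rightarrow> 'x \<Rightarrow> real" where
  "normalize u = (\<lambda>x. u x / sum u UNIV)"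

definition backward ::
  "('o \<Rightarrow> 's \<Rightarrow> 'a \<Rightarrow> 'o \<Rightarrow> bool \<Rightarrow> real) \<Rightarrow> (int \<Rightarrow> 's) \<Rightarrow> (int \<Rightarrow> 'a) \<Rightarrow> int
    \<Rightarrow> ('o::finite \<times> bool \<Rightarrow> real) \<Rightarrow> ('o \<times> bool \<Rightarrow> real)" where
  "backward hth s a t rho = normalize (\<lambda>(o1, b1).
      \<Sum>(o2, b2)\<in>UNIV. hth o1 (s (t+1)) (a (t+1)) o2 b2 * rho (o2, b2))"

(* forward smoothing operator phi K^{hat theta, theta}_{F,t};
   hhat = h(hat theta; ...), hth = h(theta; ...), rho_t = rho^theta_t *)
definition forwardK ::
  "('o \<Rightarrow> 's \<Rightarrow> 'a \<Rightarrow> 'o \<Rightarrow> bool \<Rightarrow> real) \<Rightarrow> ('o \<Rightarrow> 's \<Rightarrow> 'a \<Rightarrow> 'o \<Rightarrow> bool \<Rightarrow> real)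
    \<Rightarrow> 's \<Rightarrow> 'a \<Rightarrow> ('o::finite \<times> bool \<Rightarrow> real) \<Rightarrow> ('o \<times> bool \<Rightarrow> real) \<Rightarrow> ('o \<times> bool \<Rightarrow> real)" where
  "forwardK hhat hth st act rho_t phi = normalize (\<lambda>(o1, b1).
      \<Sum>(o0, b0)\<in>UNIV. hhat o0 st act o1 b1 * rho_t (o1, b1) * phi (o0, b0)
         / (\<Sum>(o2, b2)\<in>UNIV. hth o0 st act o2 b2 * rho_t (o2, b2)))"

definition tv_dist :: "('x::finite \<Rightarrow> real) \<Rightarrow> ('x \<Rightarrow> real) \<Rightarrow> real" where
  "tv_dist nu1 nu2 = (1/2) * (\<Sum>x\<in>UNIV. \<bar>nu1 x - nu2 x\<bar>)"

end

theory Submission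
  imports Defs
begin

(* Both kernels normalise mixtures  sum_p phi p * H p x * rho x / D p  with the same denominators
   D p = sum_y h(theta; p, y) rho y, which lie between min h(theta) and max h(theta). Replacing
   h(theta) by h(hat theta) in the numerators moves every term by at most L delta, so the two
   unnormalised measures are at l1-distance at most L delta / min h(theta), while the perturbed one
   has mass Z >= min h(hat theta) / max h(theta). Renormalising a measure of mass Z costs a factor
   at most 2 / Z in l1-distance, and the 1/2 in the total variation absorbs the 2. The C^1 hypotheses serve to make the set
   of Lipschitz constants in Lconst nonempty, so that its infimum is not a junk value. *)

lemma is_prob_weighted_sum_ge:
  assumes "is_prob r" "\<And>y. m \<le> f y"
  shows "m \<le> (\<Sum>y\<in>UNIV. f y * r y)"
proof -
  have "m = (\<Sum>y\<in>UNIV. m * r y)"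
    using assms(1) by (simp add: is_prob_def sum_distrib_left[symmetric])
  also have "\<dots> \<le> (\<Sum>y\<in>UNIV. f y * r y)"
    using assms by (intro sum_mono mult_right_mono) (auto simp: is_prob_def)
  finally show ?thesis .
qed

lemma is_prob_weighted_sum_le:
  assumes "is_prob r" "\<And>y. f y \<le> M"
  shows "(\<Sum>y\<in>UNIV. f y * r y) \<le> M"
  using is_prob_weighted_sum_ge[OF assms(1), of "- M" "\<lambda>y. - f y"] assms(2)
  by (simp add: sum_negf)

lemma tv_dist_normalize_le:
  fixes u v :: "'x::finite \<Rightarrow> real"
  assumes u: "is_prob u" and Z_pos: "0 < sum v UNIV"
  shows "tv_dist (normalize v) u \<le> (\<Sum>x\<in>UNIV. \<bar>v x - u x\<bar>) / sum v UNIV"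
proof -
  define Z where "Z = sum v UNIV"
  define l1 where "l1 = (\<Sum>x\<in>UNIV. \<bar>v x - u x\<bar>)"
  have u0: "0 \<le> u x" for x using u by (simp add: is_prob_def)
  have pointwise: "\<bar>v x / Z - u x\<bar> \<le> \<bar>v x - u x\<bar> / Z + u x * \<bar>1 - Z\<bar> / Z" for x
  proof -
    have "v x / Z - u x = (v x - u x) / Z + u x * (1 - Z) / Z"
      using Z_pos by (simp add: Z_def field_simps)
    then show ?thesis
      using abs_triangle_ineq[of "(v x - u x) / Z" "u x * (1 - Z) / Z"] Z_pos u0[of x]
      by (simp add: Z_def abs_mult abs_divide)
  qed
  have mass_defect: "\<bar>1 - Z\<bar> \<le> l1"
  proof -
    have "\<bar>1 - Z\<bar> = \<bar>\<Sum>x\<in>UNIV. v x - u x\<bar>"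
      using u by (simp add: Z_def is_prob_def sum_subtractf)
    also have "\<dots> \<le> l1" unfolding l1_def by (rule sum_abs)
    finally show ?thesis .
  qed
  have "tv_dist (normalize v) u = (1/2) * (\<Sum>x\<in>UNIV. \<bar>v x / Z - u x\<bar>)"
    by (simp add: tv_dist_def normalize_def Z_def)
  also have "\<dots> \<le> (1/2) * (\<Sum>x\<in>UNIV. \<bar>v x - u x\<bar> / Z + u x * \<bar>1 - Z\<bar> / Z)"
    using pointwise by (intro mult_left_mono sum_mono) auto
  also have "\<dots> = (1/2) * (l1 / Z + \<bar>1 - Z\<bar> / Z)"
    using u by (simp add: l1_def is_prob_def sum.distrib sum_divide_distrib[symmetric]
        sum_distrib_right[symmetric])
  also have "\<dots> \<le> (1/2) * (l1 / Z + l1 / Z)"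
    using mass_defect Z_pos by (intro mult_left_mono add_left_mono divide_right_mono) (auto simp: Z_def)
  also have "\<dots> = l1 / Z" by simp
  finally show ?thesis by (simp add: Z_def l1_def)
qed

lemma mixture_sum_swap:
  fixes G :: "'p::finite \<Rightarrow> 'x::finite \<Rightarrow> real"
  shows "(\<Sum>x\<in>UNIV. \<Sum>p\<in>UNIV. G p x * r x * phi p / D p)
       = (\<Sum>p\<in>UNIV. phi p / D p * (\<Sum>x\<in>UNIV. G p x * r x))"
  by (subst sum.swap) (simp add: sum_distrib_left mult_ac)

lemma mixture_mass_eq:
  fixes H :: "'p::finite \<Rightarrow> 'x::finite \<Rightarrow> real"
  assumes "is_prob phi" and D_pos: "\<And>p. 0 < (\<Sum>y\<in>UNIV. H p y * r y)"
  shows "(\<Sum>x\<in>UNIV. \<Sum>p\<in>UNIV. H p x * r x * phi p / (\<Sum>y\<in>UNIV. H p y * r y)) = 1"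
  using assms by (simp add: mixture_sum_swap is_prob_def less_imp_neq[symmetric])

lemma mixture_mass_ge:
  fixes Hh :: "'p::finite \<Rightarrow> 'x::finite \<Rightarrow> real"
  assumes r: "is_prob r" and phi: "is_prob phi"
    and D_pos: "\<And>p. 0 < D p" and D_le: "\<And>p. D p \<le> M"
    and mh: "0 \<le> mh" and Hh_ge: "\<And>p x. mh \<le> Hh p x"
  shows "mh / M \<le> (\<Sum>x\<in>UNIV. \<Sum>p\<in>UNIV. Hh p x * r x * phi p / D p)"
proof -
  have "mh / M = (\<Sum>p\<in>UNIV. phi p * (mh / M))"
    using phi by (simp add: is_prob_def flip: sum_distrib_right sum_divide_distrib)
  also have "\<dots> \<le> (\<Sum>p\<in>UNIV. phi p * ((\<Sum>x\<in>UNIV. Hh p x * r x) / D p))"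
  proof (intro sum_mono mult_left_mono)
    fix p
    have "mh / M \<le> mh / D p"
      using D_pos[of p] D_le[of p] mh by (simp add: frac_le)
    also have "\<dots> \<le> (\<Sum>x\<in>UNIV. Hh p x * r x) / D p"
      using is_prob_weighted_sum_ge[OF r Hh_ge] D_pos[of p] by (simp add: divide_right_mono)
    finally show "mh / M \<le> (\<Sum>x\<in>UNIV. Hh p x * r x) / D p" .
  qed (use phi in \<open>simp add: is_prob_def\<close>)
  also have "\<dots> = (\<Sum>x\<in>UNIV. \<Sum>p\<in>UNIV. Hh p x * r x * phi p / D p)"
    by (simp add: mixture_sum_swap)
  finally show ?thesis .
qed

lemma mixture_l1_dist_le:
  fixes H Hh :: "'p::finite \<Rightarrow> 'x::finite \<Rightarrow> real"
  assumes r: "is_prob r" and phi: "is_prob phi"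
    and m: "0 < m" and D_ge: "\<And>p. m \<le> D p"
    and E: "\<And>p x. \<bar>Hh p x - H p x\<bar> \<le> E"
  shows "(\<Sum>x\<in>UNIV. \<bar>(\<Sum>p\<in>UNIV. Hh p x * r x * phi p / D p)
                      - (\<Sum>p\<in>UNIV. H p x * r x * phi p / D p)\<bar>) \<le> E / m"
proof -
  have r0: "0 \<le> r x" for x using r by (simp add: is_prob_def)
  have phi0: "0 \<le> phi p" for p using phi by (simp add: is_prob_def)
  have term_le: "\<bar>(Hh p x - H p x) * r x * phi p / D p\<bar> \<le> E / m * r x * phi p" for p x
  proof -
    have "\<bar>(Hh p x - H p x) * r x * phi p / D p\<bar> = \<bar>Hh p x - H p x\<bar> * (r x * phi p) / D p"
      using r0[of x] phi0[of p] D_ge[of p] m by (simp add: abs_mult abs_divide)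
    also have "\<dots> \<le> E * (r x * phi p) / m"
      using E[of p x] r0[of x] phi0[of p] D_ge[of p] m
      by (intro frac_le mult_right_mono) auto
    finally show ?thesis by simp
  qed
  have "(\<Sum>x\<in>UNIV. \<bar>(\<Sum>p\<in>UNIV. Hh p x * r x * phi p / D p)
                    - (\<Sum>p\<in>UNIV. H p x * r x * phi p / D p)\<bar>)
      = (\<Sum>x\<in>UNIV. \<bar>\<Sum>p\<in>UNIV. (Hh p x - H p x) * r x * phi p / D p\<bar>)"
    by (simp add: sum_subtractf[symmetric] left_diff_distrib diff_divide_distrib)
  also have "\<dots> \<le> (\<Sum>x\<in>UNIV. \<Sum>p\<in>UNIV. E / m * r x * phi p)"
    using term_le by (intro sum_mono order_trans[OF sum_abs]) auto
  also have "\<dots> = E / m * sum r UNIV * sum phi UNIV"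
    by (simp only: sum_distrib_left[symmetric] sum_distrib_right[symmetric])
  finally show ?thesis using r phi by (simp add: is_prob_def)
qed

lemma tv_dist_normalize_mixtures_le:
  fixes H Hh :: "'p::finite \<Rightarrow> 'x::finite \<Rightarrow> real"
  assumes r: "is_prob r" and phi: "is_prob phi"
    and m: "0 < m" and H_ge: "\<And>p x. m \<le> H p x" and H_le: "\<And>p x. H p x \<le> M"
    and mh: "0 < mh" and Hh_ge: "\<And>p x. mh \<le> Hh p x"
    and E: "\<And>p x. \<bar>Hh p x - H p x\<bar> \<le> E"
  shows "tv_dist (normalize (\<lambda>x. \<Sum>p\<in>UNIV. Hh p x * r x * phi p / (\<Sum>y\<in>UNIV. H p y * r y)))
                 (normalize (\<lambda>x. \<Sum>p\<in>UNIV. H p x * r x * phi p / (\<Sum>y\<in>UNIV. H p y * r y)))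
         \<le> M / m * (E / mh)"
proof -
  define D where "D p = (\<Sum>y\<in>UNIV. H p y * r y)" for p
  define uh where "uh x = (\<Sum>p\<in>UNIV. Hh p x * r x * phi p / D p)" for x
  define u where "u x = (\<Sum>p\<in>UNIV. H p x * r x * phi p / D p)" for x
  have D_ge: "m \<le> D p" and D_le: "D p \<le> M" for p
    unfolding D_def using is_prob_weighted_sum_ge[OF r] is_prob_weighted_sum_le[OF r] H_ge H_le
    by auto
  have D_pos: "0 < D p" for p using D_ge[of p] m by linarith
  have "is_prob u"
  proof -
    have "0 \<le> u x" for x
      unfolding u_def using H_ge m r phi D_pos
      by (intro sum_nonneg divide_nonneg_pos mult_nonneg_nonneg)
        (auto simp: is_prob_def intro: order_trans[OF less_imp_le])
    moreover have "sum u UNIV = 1"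
      unfolding u_def D_def by (rule mixture_mass_eq[OF phi D_pos[unfolded D_def]])
    ultimately show ?thesis by (simp add: is_prob_def)
  qed
  then have normalize_u: "normalize u = u" by (simp add: is_prob_def normalize_def)
  have mass_ge: "mh / M \<le> sum uh UNIV"
    unfolding uh_def using mixture_mass_ge[OF r phi D_pos D_le _ Hh_ge] mh by simp
  have M_pos: "0 < M" using D_pos[of undefined] D_le[of undefined] by linarith
  have E_nonneg: "0 \<le> E" using E[of undefined undefined] by linarith
  have "tv_dist (normalize uh) (normalize u) \<le> (\<Sum>x\<in>UNIV. \<bar>uh x - u x\<bar>) / sum uh UNIV"
    unfolding normalize_u using \<open>is_prob u\<close> mass_ge mh M_pos
    by (intro tv_dist_normalize_le) (auto intro: less_le_trans[OF divide_pos_pos])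
  also have "\<dots> \<le> (E / m) / (mh / M)"
  proof (rule frac_le)
    show "(\<Sum>x\<in>UNIV. \<bar>uh x - u x\<bar>) \<le> E / m"
      unfolding uh_def u_def by (rule mixture_l1_dist_le[OF r phi m D_ge E])
  qed (use mass_ge mh M_pos E_nonneg m in auto)
  also have "\<dots> = M / m * (E / mh)" by simp
  finally show ?thesis unfolding uh_def u_def D_def .
qed

lemma C1_on_imp_lipschitz_on:
  fixes f :: "'p::real_normed_vector \<Rightarrow> real"
  assumes "C1_on U f" "K \<subseteq> U" "compact K" "convex K"
  shows "\<exists>L. L-lipschitz_on K f"
proof -
  obtain D where D: "\<And>x. x \<in> U \<Longrightarrow> (f has_derivative blinfun_apply (D x)) (at x)"
    and D_cont: "continuous_on U D"
    using assms(1) unfolding C1_on_def by blast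
  have "bounded ((\<lambda>x. norm (D x)) ` K)"
    using continuous_on_subset[OF D_cont assms(2)] assms(3)
    by (intro compact_imp_bounded compact_continuous_image continuous_on_norm)
  then obtain B where B: "\<And>x. x \<in> K \<Longrightarrow> norm (D x) \<le> B"
    unfolding bounded_iff by auto
  have "(max B 0)-lipschitz_on K f"
  proof (rule bounded_derivative_imp_lipschitz[where f' = "\<lambda>x. blinfun_apply (D x)"])
    show "(f has_derivative blinfun_apply (D x)) (at x within K)" if "x \<in> K" for x
      using D[of x] that assms(2) by (auto intro: has_derivative_at_withinI)
    show "onorm (blinfun_apply (D x)) \<le> max B 0" if "x \<in> K" for x
      using B[OF that] by (simp add: norm_blinfun.rep_eq[symmetric])
  qed (use assms in auto)
  then show ?thesis by blast
qed

lemma lipschitz_on_mult: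
  fixes f g :: "'p::metric_space \<Rightarrow> real"
  assumes f: "C-lipschitz_on K f" and g: "D-lipschitz_on K g"
    and f_bound: "\<And>x. x \<in> K \<Longrightarrow> \<bar>f x\<bar> \<le> A" and g_bound: "\<And>x. x \<in> K \<Longrightarrow> \<bar>g x\<bar> \<le> B"
    and A: "0 \<le> A" and B: "0 \<le> B"
  shows "(A * D + B * C)-lipschitz_on K (\<lambda>x. f x * g x)"
proof (rule lipschitz_onI)
  fix x y assume xy: "x \<in> K" "y \<in> K"
  have "\<bar>f x * g x - f y * g y\<bar> = \<bar>f x * (g x - g y) + g y * (f x - f y)\<bar>"
    by (simp add: algebra_simps)
  also have "\<dots> \<le> \<bar>f x\<bar> * \<bar>g x - g y\<bar> + \<bar>g y\<bar> * \<bar>f x - f y\<bar>"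
    by (simp add: abs_mult[symmetric] abs_triangle_ineq)
  also have "\<dots> \<le> A * (D * dist x y) + B * (C * dist x y)"
    using lipschitz_onD[OF f xy] lipschitz_onD[OF g xy] f_bound g_bound xy A B
    by (intro add_mono mult_mono) (auto simp: dist_real_def)
  finally show "dist (f x * g x) (f y * g y) \<le> (A * D + B * C) * dist x y"
    by (simp add: dist_real_def algebra_simps)
qed (use A B lipschitz_on_nonneg[OF f] lipschitz_on_nonneg[OF g] in simp)

lemma compact_lipschitz_on_mult:
  fixes f g :: "'p::metric_space \<Rightarrow> real"
  assumes "\<exists>C. C-lipschitz_on K f" "\<exists>D. D-lipschitz_on K g" "compact K"
  shows "\<exists>L. L-lipschitz_on K (\<lambda>x. f x * g x)"
proof -
  have bound: "\<exists>A\<ge>0. \<forall>x\<in>K. \<bar>u x\<bar> \<le> A" if "C-lipschitz_on K u" for C and u :: "'p \<Rightarrow> real"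
  proof -
    have "bounded (u ` K)"
      using that assms(3)
      by (intro compact_imp_bounded compact_continuous_image lipschitz_on_continuous_on)
    then obtain A where "\<forall>x\<in>K. \<bar>u x\<bar> \<le> A" unfolding bounded_iff by auto
    then show ?thesis by (intro exI[of _ "max A 0"]) auto
  qed
  from assms(1,2) obtain C D where f: "C-lipschitz_on K f" and g: "D-lipschitz_on K g" by blast
  obtain A B where "A \<ge> 0" "\<forall>x\<in>K. \<bar>f x\<bar> \<le> A" "B \<ge> 0" "\<forall>x\<in>K. \<bar>g x\<bar> \<le> B"
    using bound[OF f] bound[OF g] by blast
  with lipschitz_on_mult[OF f g] show ?thesis by blast
qed

lemma lipschitz_on_uniform_finite:
  fixes F :: "'q::finite \<Rightarrow> 'p::metric_space \<Rightarrow> real"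
  assumes "\<And>q. \<exists>L. L-lipschitz_on K (F q)"
  shows "\<exists>L. \<forall>q. L-lipschitz_on K (F q)"
proof -
  obtain L where L: "\<And>q. (L q)-lipschitz_on K (F q)" using assms by metis
  have "(\<Sum>q\<in>UNIV. L q)-lipschitz_on K (F q)" for q
    using L lipschitz_on_nonneg by (intro lipschitz_on_mono[OF L[of q]] member_le_sum) auto
  then show ?thesis by blast
qed

lemma hfun_pos:
  fixes pi_hi :: "'h \<Rightarrow> 's \<Rightarrow> 'o::finite \<Rightarrow> real"
  assumes "0 < zeta" "zeta \<le> 1"
    and "\<And>st o'. 0 < pi_hi (fst x) st o'"
    and "\<And>st o' ac. 0 < pi_lo (fst (snd x)) st o' ac"
    and "\<And>st o' bb. 0 < pi_b (snd (snd x)) st o' bb"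
  shows "0 < hfun zeta pi_hi pi_lo pi_b x o1 st ac o2 bb"
proof -
  have "0 < zeta / real CARD('o)" using assms(1) by simp
  moreover have "0 \<le> 1 - zeta" using assms(2) by simp
  ultimately have "0 < pibar_hi zeta pi_hi (fst x) st o1 bb o2"
    unfolding pibar_hi_def using assms(3) by auto
  then show ?thesis unfolding hfun_def using assms(4,5) by simp
qed

lemma hfun_lipschitz_on:
  fixes pi_hi :: "'h::real_normed_vector \<Rightarrow> 's::finite \<Rightarrow> 'o::finite \<Rightarrow> real"
    and pi_lo :: "'l::real_normed_vector \<Rightarrow> 's \<Rightarrow> 'o \<Rightarrow> 'a::finite \<Rightarrow> real"
    and pi_b :: "'b::real_normed_vector \<Rightarrow> 's \<Rightarrow> 'o \<Rightarrow> bool \<Rightarrow> real"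
  assumes C1_hi: "\<And>st o'. C1_on U (\<lambda>x. pi_hi (fst x) st o')"
    and C1_lo: "\<And>st o' ac. C1_on U (\<lambda>x. pi_lo (fst (snd x)) st o' ac)"
    and C1_b: "\<And>st o' bb. C1_on U (\<lambda>x. pi_b (snd (snd x)) st o' bb)"
    and K: "K \<subseteq> U" "compact K" "convex K"
  shows "\<exists>L. \<forall>o1 st ac o2 bb. L-lipschitz_on K (\<lambda>x. hfun zeta pi_hi pi_lo pi_b x o1 st ac o2 bb)"
proof -
  have "\<exists>L. L-lipschitz_on K (\<lambda>x. hfun zeta pi_hi pi_lo pi_b x o1 st ac o2 bb)"
    for o1 st ac o2 bb
  proof -
    have "\<exists>L. L-lipschitz_on K (\<lambda>x. pibar_hi zeta pi_hi (fst x) st o1 bb o2)"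
      unfolding pibar_hi_def
      using C1_on_imp_lipschitz_on[OF C1_hi K]
      by (cases bb) (auto intro: exI[of _ "0::real"] lipschitz_on_constant)
    then show ?thesis
      unfolding hfun_def using K(2)
      by (intro compact_lipschitz_on_mult C1_on_imp_lipschitz_on[OF C1_b K]
          C1_on_imp_lipschitz_on[OF C1_lo K])
  qed
  then have "\<exists>L. \<forall>q :: 'o \<times> 's \<times> 'a \<times> 'o \<times> bool. L-lipschitz_on K
      (\<lambda>x. case q of (o1, st, ac, o2, bb) \<Rightarrow> hfun zeta pi_hi pi_lo pi_b x o1 st ac o2 bb)"
    by (intro lipschitz_on_uniform_finite) (auto split: prod.split)
  then show ?thesis by fastforce
qed

lemma abs_diff_le_Lconst:
  fixes h :: "'p::metric_space \<Rightarrow> 'o \<Rightarrow> 's \<Rightarrow> 'a \<Rightarrow> 'o \<Rightarrow> bool \<Rightarrow> real"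
  assumes L: "\<forall>o1 st ac o2 bb. L-lipschitz_on (Theta \<inter> cball th delta) (\<lambda>x. h x o1 st ac o2 bb)"
    and th: "th \<in> Theta" and x: "x \<in> Theta" "dist th x \<le> delta"
  shows "\<bar>h x o1 st ac o2 bb - h th o1 st ac o2 bb\<bar> \<le> Lconst Theta h th delta * dist x th"
proof (cases "x = th")
  case False
  then have d_pos: "0 < dist x th" by simp
  have "0 \<le> delta" using zero_le_dist[of th x] x(2) by linarith
  have "\<bar>h x o1 st ac o2 bb - h th o1 st ac o2 bb\<bar> / dist x th \<le> Lconst Theta h th delta"
    unfolding Lconst_def
  proof (rule cInf_greatest)
    fix L' assume "L' \<in> {L. \<forall>o_prev s a o_cur b.
        L-lipschitz_on (Theta \<inter> cball th delta) (\<lambda>th'. h th' o_prev s a o_cur b)}"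
    then have "dist (h x o1 st ac o2 bb) (h th o1 st ac o2 bb) \<le> L' * dist x th"
      using th x \<open>0 \<le> delta\<close>
      by (intro lipschitz_onD[where X = "Theta \<inter> cball th delta"]) auto
    then show "\<bar>h x o1 st ac o2 bb - h th o1 st ac o2 bb\<bar> / dist x th \<le> L'"
      using d_pos by (simp add: dist_real_def divide_le_eq)
  qed (use L in blast)
  then show ?thesis using d_pos by (simp add: divide_le_eq)
qed simp

lemma forwardK_eq:
  "forwardK hh hth st ac r phi = normalize (\<lambda>x. \<Sum>p\<in>UNIV.
     hh (fst p) st ac (fst x) (snd x) * r x * phi p
       / (\<Sum>y\<in>UNIV. hth (fst p) st ac (fst y) (snd y) * r y))"
  unfolding forwardK_def by (simp add: case_prod_beta')

lemma Min_range_pos: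
  fixes g :: "'q::finite \<Rightarrow> real"
  assumes "\<And>q. 0 < g q"
  shows "0 < Min (range g)"
  using Min_in[of "range g"] assms by auto

lemma tv_dist_forwardK_le:
  fixes hh hth :: "'o::finite \<Rightarrow> 's \<Rightarrow> 'a \<Rightarrow> 'o \<Rightarrow> bool \<Rightarrow> real"
  assumes "is_prob r" "is_prob phi"
    and hth_pos: "\<And>o0 o1 b1. 0 < hth o0 st ac o1 b1"
    and hh_pos: "\<And>o0 o1 b1. 0 < hh o0 st ac o1 b1"
    and E: "\<And>o0 o1 b1. \<bar>hh o0 st ac o1 b1 - hth o0 st ac o1 b1\<bar> \<le> E"
  shows "tv_dist (forwardK hh hth st ac r phi) (forwardK hth hth st ac r phi)
         \<le> (Max (range (\<lambda>(o0, o1, b1). hth o0 st ac o1 b1))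
             / Min (range (\<lambda>(o0, o1, b1). hth o0 st ac o1 b1)))
           * (E / Min (range (\<lambda>(o0, o1, b1). hh o0 st ac o1 b1)))"
  unfolding forwardK_eq
proof (rule tv_dist_normalize_mixtures_le[where
      H = "\<lambda>p x. hth (fst p) st ac (fst x) (snd x)" and
      Hh = "\<lambda>p x. hh (fst p) st ac (fst x) (snd x)", OF assms(1,2)])
  fix p x :: "'o \<times> bool"
  let ?f = "\<lambda>(o0, o1, b1). hth o0 st ac o1 b1" and ?fh = "\<lambda>(o0, o1, b1). hh o0 st ac o1 b1"
  let ?q = "(fst p, fst x, snd x)"
  show "Min (range ?f) \<le> hth (fst p) st ac (fst x) (snd x)"
    using Min_le[OF _ rangeI[of ?f ?q]] by (simp add: case_prod_beta)
  show "hth (fst p) st ac (fst x) (snd x) \<le> Max (range ?f)"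
    using Max_ge[OF _ rangeI[of ?f ?q]] by (simp add: case_prod_beta)
  show "Min (range ?fh) \<le> hh (fst p) st ac (fst x) (snd x)"
    using Min_le[OF _ rangeI[of ?fh ?q]] by (simp add: case_prod_beta)
qed (use hth_pos hh_pos E in \<open>auto intro!: Min_range_pos\<close>)

theorem lemma9:
  fixes pi_hi :: "'h::euclidean_space \<Rightarrow> 's::finite \<Rightarrow> 'o::finite \<Rightarrow> real"
    and pi_lo :: "'l::euclidean_space \<Rightarrow> 's \<Rightarrow> 'o \<Rightarrow> 'a::finite \<Rightarrow> real"
    and pi_b :: "'b::euclidean_space \<Rightarrow> 's \<Rightarrow> 'o \<Rightarrow> bool \<Rightarrow> real"
    and Theta_hi :: "'h set" and Theta_lo :: "'l set" and Theta_b :: "'b set"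
    and U :: "('h \<times> 'l \<times> 'b) set"
    and zeta :: real
    and s :: "int \<Rightarrow> 's" and a :: "int \<Rightarrow> 'a"
    and th thhat :: "'h \<times> 'l \<times> 'b"
    and t :: int
    and rho :: "int \<Rightarrow> 'o \<times> bool \<Rightarrow> real"
    and phi :: "'o \<times> bool \<Rightarrow> real"
  defines "Theta \<equiv> Theta_hi \<times> Theta_lo \<times> Theta_b"
    and "h \<equiv> hfun zeta pi_hi pi_lo pi_b"
  assumes Theta_convex: "convex Theta" and Theta_compact: "compact Theta"
    and U_open: "open U" and Theta_sub: "Theta \<subseteq> U"
    and pos_hi: "\<And>x st o'. x \<in> U \<Longrightarrow> 0 < pi_hi (fst x) st o'"
    and pos_lo: "\<And>x st o' ac. x \<in> U \<Longrightarrow> 0 < pi_lo (fst (snd x)) st o' ac"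
    and pos_b: "\<And>x st o' bb. x \<in> U \<Longrightarrow> 0 < pi_b (snd (snd x)) st o' bb"
    and sum_hi: "\<And>x st. x \<in> U \<Longrightarrow> (\<Sum>o'\<in>UNIV. pi_hi (fst x) st o') = 1"
    and sum_lo: "\<And>x st o'. x \<in> U \<Longrightarrow> (\<Sum>ac\<in>UNIV. pi_lo (fst (snd x)) st o' ac) = 1"
    and sum_b: "\<And>x st o'. x \<in> U \<Longrightarrow> (\<Sum>bb\<in>UNIV. pi_b (snd (snd x)) st o' bb) = 1"
    and C1_hi: "\<And>st o'. C1_on U (\<lambda>x. pi_hi (fst x) st o')"
    and C1_lo: "\<And>st o' ac. C1_on U (\<lambda>x. pi_lo (fst (snd x)) st o' ac)"
    and C1_b: "\<And>st o' bb. C1_on U (\<lambda>x. pi_b (snd (snd x)) st o' bb)"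
    and zeta: "0 < zeta" "zeta < 1"
    and th_in: "th \<in> Theta" and thhat_in: "thhat \<in> Theta"
    and rho_pos: "\<And>k x. 0 < rho k x"
    and rho_prob: "\<And>k. is_prob (rho k)"
    and rho_backward: "\<And>k. backward (h th) s a k (rho (k + 1)) = rho k"
    and phi_prob: "is_prob phi"
  shows "tv_dist (forwardK (h thhat) (h th) (s t) (a t) (rho t) phi)
                 (forwardK (h th) (h th) (s t) (a t) (rho t) phi)
         \<le> (Max (range (\<lambda>(o0, o1, b1). h th o0 (s t) (a t) o1 b1))
             / Min (range (\<lambda>(o0, o1, b1). h th o0 (s t) (a t) o1 b1)))
           * (Lconst Theta h th (norm (thhat - th)) * norm (thhat - th)
             / Min (range (\<lambda>(o0, o1, b1). h thhat o0 (s t) (a t) o1 b1)))"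
proof -
  define delta where "delta = norm (thhat - th)"
  have in_U: "th \<in> U" "thhat \<in> U" using th_in thhat_in Theta_sub by auto
  have h_pos: "0 < h x o1 st ac o2 bb" if "x \<in> U" for x o1 st ac o2 bb
    unfolding h_def using zeta pos_hi[OF that] pos_lo[OF that] pos_b[OF that]
    by (intro hfun_pos) auto
  have K: "Theta \<inter> cball th delta \<subseteq> U" "compact (Theta \<inter> cball th delta)"
    "convex (Theta \<inter> cball th delta)"
    using Theta_sub Theta_compact Theta_convex by (auto intro: compact_Int_closed convex_Int)
  obtain L where L: "\<forall>o1 st ac o2 bb. L-lipschitz_on (Theta \<inter> cball th delta)
      (\<lambda>x. h x o1 st ac o2 bb)"
    using hfun_lipschitz_on[where pi_hi = pi_hi and pi_lo = pi_lo and pi_b = pi_b and zeta = zeta,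
        OF C1_hi C1_lo C1_b K]
    unfolding h_def by blast
  have "dist thhat th = delta" by (simp add: delta_def dist_norm)
  then have "\<bar>h thhat o1 st ac o2 bb - h th o1 st ac o2 bb\<bar>
      \<le> Lconst Theta h th delta * delta" for o1 st ac o2 bb
    using abs_diff_le_Lconst[OF L th_in thhat_in] by (simp add: dist_commute)
  then show ?thesis
    unfolding delta_def
    using in_U h_pos by (intro tv_dist_forwardK_le rho_prob phi_prob) auto
qed

end
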